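(* Let $R$ be a de Groot continuum with two distinct points $b_1,b_2$. Let $Y=(\mathbb{Z}\times R)/\sigma$, where $\mathbb{Z}$ is discrete and $\sigma$ is the equivalence relation whose only nontrivial identifications are $(k,b_2)\sim(k+1,b_1)$ for all $k\in\mathbb{Z}$. Then $Y$ is a connected locally compact space whose homeomorphism group $\mathcal{H}(Y)$ is isomorphic to the infinite cyclic group $\mathbb{Z}$; the isomorphism is given by letting $m\in\mathbb{Z}$ act via $\sigma(k,x)\mapsto\sigma(m+k,x)$.
   Context: A de Groot continuum (rigid continuum) is a compact connected metric space $R$ with more than one point such that every continuous map $R\to R$ is either the identity map or a constant map. $\mathcal{H}(Y)$ denotes the group of all homeomorphisms of a space $Y$ onto itself. The space $Y$ is the realisation of the directed chain $\mathbb{Z}$ (Cayley graph of $(\mathbb{Z},\{1\})$) obtained by inserting a copy of $R$ into each edge $k\to k+1$. *)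

theory Defs
  imports "HOL-Analysis.Analysis" "HOL-Algebra.Elementary_Groups"
begin

definition deGroot_continuum :: "'a topology \<Rightarrow> bool" where
  "deGroot_continuum R \<longleftrightarrow>
     compact_space R \<and> connected_space R \<and> metrizable_space R \<and>
     (\<exists>x y. x \<in> topspace R \<and> y \<in> topspace R \<and> x \<noteq> y) \<and>
     (\<forall>f. continuous_map R R f \<longrightarrow>
          (\<forall>x \<in> topspace R. f x = x) \<or> (\<exists>c. \<forall>x \<in> topspace R. f x = c))"

definition quotient_topology :: "'a topology \<Rightarrow> ('a \<Rightarrow> 'b) \<Rightarrow> 'b topology" where
  "quotient_topology X f =
     topology (\<lambda>U. U \<subseteq> f ` topspace X \<and> openin X {x \<in> topspace X. f x \<in> U})"

definition chain_rel :: "'a topology \<Rightarrow> 'a \<Rightarrow> 'a \<Rightarrow> ((int \<times> 'a) \<times> (int \<times> 'a)) set" where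
  "chain_rel R b1 b2 = {(p, q). p \<in> UNIV \<times> topspace R \<and> q \<in> UNIV \<times> topspace R \<and>
      (p = q \<or> (\<exists>k. p = (k, b2) \<and> q = (k + 1, b1)) \<or> (\<exists>k. p = (k + 1, b1) \<and> q = (k, b2)))}"

text \<open>The quotient map sigma : Z x R -> Y (points of Y are equivalence classes).\<close>
definition chain_proj :: "'a topology \<Rightarrow> 'a \<Rightarrow> 'a \<Rightarrow> int \<times> 'a \<Rightarrow> (int \<times> 'a) set" where
  "chain_proj R b1 b2 p = chain_rel R b1 b2 `` {p}"

definition chain_space :: "'a topology \<Rightarrow> 'a \<Rightarrow> 'a \<Rightarrow> (int \<times> 'a) set topology" where
  "chain_space R b1 b2 =
     quotient_topology (prod_topology (discrete_topology UNIV) R) (chain_proj R b1 b2)"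

definition chain_shift :: "int \<Rightarrow> (int \<times> 'a) set \<Rightarrow> (int \<times> 'a) set" where
  "chain_shift m C = (\<lambda>(k, x). (m + k, x)) ` C"

definition homeo_group :: "'b topology \<Rightarrow> ('b \<Rightarrow> 'b) monoid" where
  "homeo_group Y =
     \<lparr>carrier = {h. homeomorphic_map Y Y h \<and> h \<in> extensional (topspace Y)},
      monoid.mult = (\<lambda>f g. compose (topspace Y) f g),
      one = restrict id (topspace Y)\<rparr>"

end

theory Submission imports Defs begin

(* The key tool is, for each j, the
   "coordinate" retraction coord j : Y -> R that collapses every copy left of j to b1,
   every copy right of j to b2, and is the identity on the j-th copy.  These maps are
   continuous and jointly separate the points of Y.

   Given a homeomorphism h and a copy k, each map coord j o h o (copy k) is a continuous
   self-map of R, hence the identity or a constant by rigidity; injectivity of h forces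
   the identity for some j, and then h maps copy k onto copy j identically.  Gluing
   forces the copy index to be shifted by a constant m, so h is the shift by m. *)

lemma homeo_group_carrier_closed:
  assumes "f \<in> carrier (homeo_group Z)"
  shows "f \<in> topspace Z \<rightarrow> topspace Z"
  using assms homeomorphic_imp_continuous_map continuous_map_funspace
  unfolding homeo_group_def by fastforce

text \<open>The homeomorphisms of any space, restricted to its point set, form a group under
  composition; the inverse of f is the restriction of its inverse homeomorphism.\<close>

lemma group_homeo_group: "group (homeo_group Z)"
proof (rule groupI)
  fix f g assume f: "f \<in> carrier (homeo_group Z)" and g: "g \<in> carrier (homeo_group Z)"
  have "homeomorphic_map Z Z (f \<circ> g)"
    using f g homeomorphic_map_compose unfolding homeo_group_def by auto
  then have "homeomorphic_map Z Z (compose (topspace Z) f g)"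
    by (rule homeomorphic_map_eq) (simp add: compose_def)
  then show "f \<otimes>\<^bsub>homeo_group Z\<^esub> g \<in> carrier (homeo_group Z)"
    unfolding homeo_group_def by simp
next
  show "\<one>\<^bsub>homeo_group Z\<^esub> \<in> carrier (homeo_group Z)"
    unfolding homeo_group_def
    by (simp add: homeomorphic_map_eq[OF homeomorphic_map_id[THEN iffD2]])
next
  fix f g h assume "h \<in> carrier (homeo_group Z)"
  from homeo_group_carrier_closed[OF this]
  show "f \<otimes>\<^bsub>homeo_group Z\<^esub> g \<otimes>\<^bsub>homeo_group Z\<^esub> h
        = f \<otimes>\<^bsub>homeo_group Z\<^esub> (g \<otimes>\<^bsub>homeo_group Z\<^esub> h)"
    unfolding homeo_group_def by (simp add: compose_assoc)
next
  fix f assume f: "f \<in> carrier (homeo_group Z)"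
  show "\<one>\<^bsub>homeo_group Z\<^esub> \<otimes>\<^bsub>homeo_group Z\<^esub> f = f"
    using f homeo_group_carrier_closed[OF f]
    unfolding homeo_group_def by (auto simp: compose_def fun_eq_iff extensional_def)
next
  fix f assume f: "f \<in> carrier (homeo_group Z)"
  obtain g where g: "homeomorphic_maps Z Z f g"
    using f unfolding homeo_group_def homeomorphic_map_maps by auto
  have "homeomorphic_map Z Z g" using g homeomorphic_maps_map by blast
  then have "restrict g (topspace Z) \<in> carrier (homeo_group Z)"
    using homeomorphic_map_eq[of Z Z g] unfolding homeo_group_def by simp
  moreover have "restrict g (topspace Z) \<otimes>\<^bsub>homeo_group Z\<^esub> f = \<one>\<^bsub>homeo_group Z\<^esub>"
    using g homeo_group_carrier_closed[OF f]
    unfolding homeo_group_def homeomorphic_maps_def by (auto simp: compose_def fun_eq_iff)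
  ultimately show "\<exists>g\<in>carrier (homeo_group Z). g \<otimes>\<^bsub>homeo_group Z\<^esub> f = \<one>\<^bsub>homeo_group Z\<^esub>"
    by blast
qed

lemma istopology_quotient:
  "istopology (\<lambda>U. U \<subseteq> f ` topspace X \<and> openin X {x \<in> topspace X. f x \<in> U})"
proof -
  have "{x \<in> topspace X. f x \<in> S \<inter> T}
        = {x \<in> topspace X. f x \<in> S} \<inter> {x \<in> topspace X. f x \<in> T}" for S T by blast
  moreover have "{x \<in> topspace X. f x \<in> \<Union>\<K>} = (\<Union>K\<in>\<K>. {x \<in> topspace X. f x \<in> K})"
    for \<K> by blast
  ultimately show ?thesis unfolding istopology_def by auto
qed

lemma openin_quotient_topology:
  "openin (quotient_topology X f) U \<longleftrightarrow>
     U \<subseteq> f ` topspace X \<and> openin X {x \<in> topspace X. f x \<in> U}"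
  unfolding quotient_topology_def using istopology_quotient[where f = f and X = X] by simp

lemma topspace_quotient_topology: "topspace (quotient_topology X f) = f ` topspace X"
proof -
  have "{x \<in> topspace X. f x \<in> f ` topspace X} = topspace X" by blast
  then have "openin (quotient_topology X f) (f ` topspace X)"
    unfolding openin_quotient_topology by simp
  then show ?thesis
    using openin_subset openin_quotient_topology[of X f "topspace (quotient_topology X f)"]
    by blast
qed

lemma quotient_map_quotient_topology: "quotient_map X (quotient_topology X f) f"
  unfolding quotient_map_def topspace_quotient_topology openin_quotient_topology by simp

definition quotient_lift :: "'a topology \<Rightarrow> ('a \<Rightarrow> 'b) \<Rightarrow> ('a \<Rightarrow> 'c) \<Rightarrow> 'b \<Rightarrow> 'c" where
  "quotient_lift X f g y = g (SOME x. x \<in> topspace X \<and> f x = y)"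

lemma quotient_lift_apply:
  assumes "x \<in> topspace X"
    and "\<And>x x'. \<lbrakk>x \<in> topspace X; x' \<in> topspace X; f x = f x'\<rbrakk> \<Longrightarrow> g x = g x'"
  shows "quotient_lift X f g (f x) = g x"
proof -
  define x' where "x' = (SOME x'. x' \<in> topspace X \<and> f x' = f x)"
  have "\<exists>x'. x' \<in> topspace X \<and> f x' = f x" using assms(1) by blast
  then have "x' \<in> topspace X \<and> f x' = f x" unfolding x'_def by (rule someI_ex)
  then have "g x' = g x" using assms by blast
  then show ?thesis unfolding quotient_lift_def x'_def .
qed

lemma continuous_map_quotient_lift:
  assumes "quotient_map X Y f" and "continuous_map X Z g"
    and "\<And>x x'. \<lbrakk>x \<in> topspace X; x' \<in> topspace X; f x = f x'\<rbrakk> \<Longrightarrow> g x = g x'"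
  shows "continuous_map Y Z (quotient_lift X f g)"
proof (rule continuous_compose_quotient_map[OF assms(1)])
  show "continuous_map X Z (quotient_lift X f g \<circ> f)"
    using assms(2) by (rule continuous_map_eq) (metis comp_apply quotient_lift_apply assms(3))
qed

lemma continuous_map_discrete_prod:
  assumes "\<And>k. k \<in> I \<Longrightarrow> continuous_map R Z (\<lambda>x. g (k, x))"
  shows "continuous_map (prod_topology (discrete_topology I) R) Z g"
  unfolding continuous_map_def
proof (intro conjI allI impI)
  show "g \<in> topspace (prod_topology (discrete_topology I) R) \<rightarrow> topspace Z"
    using assms continuous_map_funspace by fastforce
next
  fix U assume U: "openin Z U"
  have eq: "{p \<in> topspace (prod_topology (discrete_topology I) R). g p \<in> U}
            = (\<Union>k\<in>I. {k} \<times> {x \<in> topspace R. g (k, x) \<in> U})" by auto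
  have "openin (prod_topology (discrete_topology I) R) ({k} \<times> {x \<in> topspace R. g (k, x) \<in> U})"
    if "k \<in> I" for k
    using assms[OF that] U that unfolding openin_prod_Times_iff continuous_map_def by auto
  then show "openin (prod_topology (discrete_topology I) R)
               {p \<in> topspace (prod_topology (discrete_topology I) R). g p \<in> U}"
    unfolding eq by (intro openin_Union) auto
qed

text \<open>A connected T1 space containing two distinct points contains a third one: it has
  no isolated points.\<close>

lemma connected_t1_third_point:
  assumes "connected_space R" "t1_space R"
    and "a \<in> topspace R" "b \<in> topspace R" "a \<noteq> b"
  shows "\<exists>c \<in> topspace R. c \<noteq> a \<and> c \<noteq> b"
proof -
  have "\<nexists>c. topspace R = {c}" using assms(3-5) by auto
  then have "topspace R \<subseteq> R derived_set_of topspace R"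
    using assms(1) by (intro connectedin_imp_perfect_gen[OF assms(2)]) (simp_all add: connectedin_topspace)
  then have "a \<in> R derived_set_of topspace R" using assms(3) by blast
  moreover have "openin R (topspace R - {b})"
    by (rule t1_space_openin_delete_alt[THEN iffD1, OF assms(2), rule_format]) simp
  ultimately show ?thesis
    using assms(3,5) unfolding in_derived_set_of by (auto dest: spec[where x = "topspace R - {b}"])
qed

section \<open>The chain of de Groot continua\<close>

locale rigid_chain =
  fixes R :: "'a topology" and b1 b2 :: 'a
  assumes de_Groot: "deGroot_continuum R"
    and b1: "b1 \<in> topspace R" and b2: "b2 \<in> topspace R" and b1_neq_b2: "b1 \<noteq> b2"
begin

abbreviation "X \<equiv> prod_topology (discrete_topology (UNIV :: int set)) R"
abbreviation "\<sigma> \<equiv> chain_proj R b1 b2"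
abbreviation "Y \<equiv> chain_space R b1 b2"

lemma rigid:
  "continuous_map R R f \<Longrightarrow> (\<forall>x \<in> topspace R. f x = x) \<or> (\<exists>c. \<forall>x \<in> topspace R. f x = c)"
  using de_Groot unfolding deGroot_continuum_def by blast

lemma t1_R: "t1_space R"
  using de_Groot metrizable_imp_Hausdorff_space Hausdorff_imp_t1_space
  unfolding deGroot_continuum_def by blast

lemma openin_R_minus_point: "openin R (topspace R - {x})"
  by (rule t1_space_openin_delete_alt[THEN iffD1, OF t1_R, rule_format]) simp

lemma quotient_map_\<sigma>: "quotient_map X Y \<sigma>"
  unfolding chain_space_def by (rule quotient_map_quotient_topology)

lemma topspace_Y: "y \<in> topspace Y \<longleftrightarrow> (\<exists>k x. x \<in> topspace R \<and> y = \<sigma> (k, x))"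
proof -
  have "topspace Y = \<sigma> ` (UNIV \<times> topspace R)"
    using quotient_imp_surjective_map[OF quotient_map_\<sigma>] by simp
  then show ?thesis by blast
qed

lemma \<sigma>_in_Y: "x \<in> topspace R \<Longrightarrow> \<sigma> (k, x) \<in> topspace Y"
  unfolding topspace_Y by blast

lemma \<sigma>_eq_iff:
  assumes "x \<in> topspace R" "z \<in> topspace R"
  shows "\<sigma> (k, x) = \<sigma> (a, z) \<longleftrightarrow>
           (a = k \<and> z = x) \<or> (x = b2 \<and> a = k + 1 \<and> z = b1) \<or> (x = b1 \<and> k = a + 1 \<and> z = b2)"
proof -
  have "equiv (UNIV \<times> topspace R) (chain_rel R b1 b2)"
    unfolding equiv_def refl_on_def sym_def trans_def chain_rel_def using b1_neq_b2 by auto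
  then have "\<sigma> (k, x) = \<sigma> (a, z) \<longleftrightarrow> ((k, x), (a, z)) \<in> chain_rel R b1 b2"
    unfolding chain_proj_def using assms by (intro eq_equiv_class_iff) auto
  also have "\<dots> \<longleftrightarrow>
      (a = k \<and> z = x) \<or> (x = b2 \<and> a = k + 1 \<and> z = b1) \<or> (x = b1 \<and> k = a + 1 \<and> z = b2)"
    using assms unfolding chain_rel_def by auto
  finally show ?thesis .
qed

lemma \<sigma>_glue: "\<sigma> (k, b2) = \<sigma> (k + 1, b1)"
  using \<sigma>_eq_iff[OF b2 b1] by simp

lemma continuous_map_copy: "continuous_map R Y (\<lambda>x. \<sigma> (k, x))"
proof -
  have "continuous_map R X (\<lambda>x. (k, x))"
    by (intro continuous_map_pairedI) auto
  then show ?thesis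
    using continuous_map_compose[OF _ quotient_imp_continuous_map[OF quotient_map_\<sigma>]]
    by (simp add: o_def)
qed

subsection \<open>Coordinate retractions\<close>

definition collapse :: "int \<Rightarrow> int \<times> 'a \<Rightarrow> 'a" where
  "collapse j p = (if fst p < j then b1 else if fst p > j then b2 else snd p)"

definition coord :: "int \<Rightarrow> (int \<times> 'a) set \<Rightarrow> 'a" where
  "coord j = quotient_lift X \<sigma> (collapse j)"

lemma collapse_compatible:
  assumes "p \<in> topspace X" "q \<in> topspace X" "\<sigma> p = \<sigma> q"
  shows "collapse j p = collapse j q"
  using assms \<sigma>_eq_iff unfolding collapse_def by (cases p, cases q) auto

lemma coord_\<sigma>: "x \<in> topspace R \<Longrightarrow> coord j (\<sigma> (k, x)) = collapse j (k, x)"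
  unfolding coord_def by (rule quotient_lift_apply[OF _ collapse_compatible]) auto

lemma continuous_map_coord: "continuous_map Y R (coord j)"
  unfolding coord_def
proof (rule continuous_map_quotient_lift[OF quotient_map_\<sigma>])
  show "continuous_map X R (collapse j)"
    by (rule continuous_map_discrete_prod) (auto simp: collapse_def b1 b2)
qed (rule collapse_compatible)

text \<open>The collapses determine a point of Y: comparing them at the indices k, k+1 and
  a, a+1 recovers the identifications made by \<sigma>.\<close>

lemma collapses_determine_\<sigma>:
  assumes "x \<in> topspace R" "z \<in> topspace R" "\<And>j. collapse j (k, x) = collapse j (a, z)"
  shows "\<sigma> (k, x) = \<sigma> (a, z)"
proof -
  have "collapse k (k, x) = collapse k (a, z)" "collapse a (k, x) = collapse a (a, z)"
    "collapse (k + 1) (k, x) = collapse (k + 1) (a, z)"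
    "collapse (a + 1) (k, x) = collapse (a + 1) (a, z)"
    using assms(3) by blast+
  then show ?thesis
    unfolding \<sigma>_eq_iff[OF assms(1,2)] using b1_neq_b2 unfolding collapse_def
    by (auto split: if_splits)
qed

lemma coords_separate:
  assumes "y \<in> topspace Y" "y' \<in> topspace Y" "\<And>j. coord j y = coord j y'"
  shows "y = y'"
proof -
  obtain k x where kx: "x \<in> topspace R" "y = \<sigma> (k, x)"
    using assms(1) unfolding topspace_Y by blast
  obtain a z where az: "z \<in> topspace R" "y' = \<sigma> (a, z)"
    using assms(2) unfolding topspace_Y by blast
  have "collapse j (k, x) = collapse j (a, z)" for j
    using assms(3)[of j] unfolding kx(2) az(2) coord_\<sigma>[OF kx(1)] coord_\<sigma>[OF az(1)] .
  then show ?thesis unfolding kx(2) az(2) by (rule collapses_determine_\<sigma>[OF kx(1) az(1)])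
qed

lemma collapse_interior:
  assumes "x \<noteq> b1" "x \<noteq> b2" "collapse j (a, z) = x"
  shows "a = j \<and> z = x"
  using assms unfolding collapse_def by (auto split: if_splits)

subsection \<open>Homeomorphisms permute the copies\<close>

lemma coord_of_copy_rigid:
  assumes "continuous_map Y Y h"
  shows "(\<forall>x \<in> topspace R. coord j (h (\<sigma> (k, x))) = x) \<or>
         (\<exists>c. \<forall>x \<in> topspace R. coord j (h (\<sigma> (k, x))) = c)"
proof (rule rigid)
  show "continuous_map R R (\<lambda>x. coord j (h (\<sigma> (k, x))))"
    using continuous_map_compose[OF continuous_map_compose[OF continuous_map_copy assms]
                                    continuous_map_coord]
    by (simp add: o_def)
qed

lemma coord_of_copy_constant:
  assumes "continuous_map Y Y h" "x1 \<in> topspace R" "coord j (h (\<sigma> (k, x1))) \<noteq> x1"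
    and "x \<in> topspace R"
  shows "coord j (h (\<sigma> (k, x))) = coord j (h (\<sigma> (k, x1)))"
proof -
  obtain c where "\<forall>x \<in> topspace R. coord j (h (\<sigma> (k, x))) = c"
    using coord_of_copy_rigid[OF assms(1), of j k] assms(2,3) by blast
  then show ?thesis using assms(2,4) by simp
qed

lemma map_copy_in_Y:
  "continuous_map Y Y h \<Longrightarrow> x \<in> topspace R \<Longrightarrow> h (\<sigma> (k, x)) \<in> topspace Y"
  by (rule funcset_mem[OF continuous_map_funspace \<sigma>_in_Y])

text \<open>If h is injective, some coordinate of h on the k-th copy is the identity: otherwise
  all coordinates would be constant there and h would identify two points of the copy.\<close>

lemma injective_has_identity_coord:
  assumes h: "continuous_map Y Y h" "inj_on h (topspace Y)"
    and x0: "x0 \<in> topspace R" "x0 \<noteq> b1"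
  shows "\<exists>j. \<forall>x \<in> topspace R. coord j (h (\<sigma> (k, x))) = x"
proof (rule ccontr)
  assume none: "\<nexists>j. \<forall>x \<in> topspace R. coord j (h (\<sigma> (k, x))) = x"
  have "coord j (h (\<sigma> (k, b1))) = coord j (h (\<sigma> (k, x0)))" for j
  proof -
    obtain c where "\<forall>x \<in> topspace R. coord j (h (\<sigma> (k, x))) = c"
      using coord_of_copy_rigid[OF h(1), of j k] none by blast
    then show ?thesis using b1 x0(1) by simp
  qed
  then have "h (\<sigma> (k, b1)) = h (\<sigma> (k, x0))"
    by (intro coords_separate map_copy_in_Y[OF h(1)] b1 x0(1))
  then have "\<sigma> (k, b1) = \<sigma> (k, x0)"
    by (rule inj_onD[OF h(2) _ \<sigma>_in_Y[OF b1] \<sigma>_in_Y[OF x0(1)]])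
  then show False
    using \<sigma>_eq_iff[OF b1 x0(1)] x0(2) b1_neq_b2 by auto
qed

text \<open>A point x0 off the endpoints is read off the identity coordinate j; every other
  coordinate moves x0 to an endpoint, so it is constant and agrees with that of \<sigma>(j,-).\<close>

lemma injective_maps_copy_to_copy:
  assumes h: "continuous_map Y Y h" "inj_on h (topspace Y)"
  shows "\<exists>j. \<forall>x \<in> topspace R. h (\<sigma> (k, x)) = \<sigma> (j, x)"
proof -
  obtain x0 where x0: "x0 \<in> topspace R" "x0 \<noteq> b1" "x0 \<noteq> b2"
    using connected_t1_third_point[OF _ t1_R b1 b2 b1_neq_b2] de_Groot
    unfolding deGroot_continuum_def by blast
  obtain j where j: "\<And>x. x \<in> topspace R \<Longrightarrow> coord j (h (\<sigma> (k, x))) = x"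
    using injective_has_identity_coord[OF h x0(1,2)] by blast
  have h_x0: "h (\<sigma> (k, x0)) = \<sigma> (j, x0)"
  proof -
    obtain a z where az: "z \<in> topspace R" "h (\<sigma> (k, x0)) = \<sigma> (a, z)"
      using map_copy_in_Y[OF h(1) x0(1)] unfolding topspace_Y by blast
    have "collapse j (a, z) = x0" using j[OF x0(1)] unfolding az(2) coord_\<sigma>[OF az(1)] .
    then have "a = j \<and> z = x0" using collapse_interior x0(2,3) by blast
    then show ?thesis using az(2) by simp
  qed
  have "coord i (h (\<sigma> (k, x))) = coord i (\<sigma> (j, x))" if x: "x \<in> topspace R" for i x
  proof (cases "i = j")
    case True then show ?thesis using j[OF x] coord_\<sigma>[OF x] by (simp add: collapse_def)
  next
    case False
    then have "coord i (h (\<sigma> (k, x0))) \<noteq> x0"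
      using x0 unfolding h_x0 coord_\<sigma>[OF x0(1)] collapse_def by auto
    then have "coord i (h (\<sigma> (k, x))) = coord i (h (\<sigma> (k, x0)))"
      by (rule coord_of_copy_constant[OF h(1) x0(1) _ x])
    also have "\<dots> = coord i (\<sigma> (j, x))"
      using False unfolding h_x0 coord_\<sigma>[OF x0(1)] coord_\<sigma>[OF x] collapse_def by simp
    finally show ?thesis .
  qed
  then have "h (\<sigma> (k, x)) = \<sigma> (j, x)" if "x \<in> topspace R" for x
    using that by (intro coords_separate map_copy_in_Y[OF h(1)] \<sigma>_in_Y)
  then show ?thesis by blast
qed

subsection \<open>Shifts\<close>

lemma shift_\<sigma>:
  assumes "x \<in> topspace R"
  shows "chain_shift m (\<sigma> (k, x)) = \<sigma> (m + k, x)"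
proof
  show "chain_shift m (\<sigma> (k, x)) \<subseteq> \<sigma> (m + k, x)"
    unfolding chain_shift_def chain_proj_def chain_rel_def using assms by auto
  show "\<sigma> (m + k, x) \<subseteq> chain_shift m (\<sigma> (k, x))"
  proof
    fix q assume q: "q \<in> \<sigma> (m + k, x)"
    obtain a z where qa: "q = (a, z)" by fastforce
    have "(a - m, z) \<in> \<sigma> (k, x)"
      using q assms unfolding qa chain_proj_def chain_rel_def by auto
    then show "q \<in> chain_shift m (\<sigma> (k, x))"
      unfolding chain_shift_def qa by (auto intro: image_eqI[of _ _ "(a - m, z)"])
  qed
qed

lemma shift_in_Y: "y \<in> topspace Y \<Longrightarrow> chain_shift m y \<in> topspace Y"
  unfolding topspace_Y by (metis shift_\<sigma>)

lemma shift_add: "y \<in> topspace Y \<Longrightarrow> chain_shift (m + n) y = chain_shift m (chain_shift n y)"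
  unfolding topspace_Y using shift_\<sigma> by (auto simp: add.assoc)

lemma shift_0: "y \<in> topspace Y \<Longrightarrow> chain_shift 0 y = y"
  unfolding topspace_Y using shift_\<sigma> by auto

lemma homeomorphic_map_shift: "homeomorphic_map Y Y (chain_shift m)"
proof -
  have cont: "continuous_map Y Y (chain_shift n)" for n
  proof (rule continuous_compose_quotient_map[OF quotient_map_\<sigma>])
    have "continuous_map X Y (\<lambda>p. \<sigma> (n + fst p, snd p))"
      by (rule continuous_map_discrete_prod) (simp add: continuous_map_copy)
    then show "continuous_map X Y (chain_shift n \<circ> \<sigma>)"
      by (rule continuous_map_eq) (auto simp: shift_\<sigma>)
  qed
  show ?thesis
    unfolding homeomorphic_map_maps homeomorphic_maps_def
    by (rule exI[of _ "chain_shift (- m)"]) (auto simp: cont shift_add[symmetric] shift_0)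
qed

text \<open>Every homeomorphism (indeed every injective continuous self-map) of Y is a shift:
  copy k goes to copy J k, and gluing copy k to copy k+1 forces J (k+1) = J k + 1.\<close>

lemma injective_map_is_shift:
  assumes h: "continuous_map Y Y h" "inj_on h (topspace Y)"
  shows "\<exists>m. \<forall>y \<in> topspace Y. h y = chain_shift m y"
proof -
  have "\<forall>k. \<exists>j. \<forall>x \<in> topspace R. h (\<sigma> (k, x)) = \<sigma> (j, x)"
    using injective_maps_copy_to_copy[OF h] by blast
  then obtain J where J: "\<forall>k. \<forall>x \<in> topspace R. h (\<sigma> (k, x)) = \<sigma> (J k, x)"
    by metis
  have J_step: "J (k + 1) = J k + 1" for k
  proof -
    have "\<sigma> (J k, b2) = h (\<sigma> (k, b2))" using J b2 by simp
    also have "\<dots> = h (\<sigma> (k + 1, b1))" by (simp only: \<sigma>_glue)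
    also have "\<dots> = \<sigma> (J (k + 1), b1)" using J b1 by simp
    finally show ?thesis using \<sigma>_eq_iff[OF b2 b1] b1_neq_b2 by simp
  qed
  have J_affine: "J k = J 0 + k" for k
  proof (induct k rule: int_induct[where k = 0])
    case (step1 i) then show ?case using J_step[of i] by simp
  next
    case (step2 i) then show ?case using J_step[of "i - 1"] by simp
  qed simp
  have "h y = chain_shift (J 0) y" if y: "y \<in> topspace Y" for y
  proof -
    obtain k x where kx: "x \<in> topspace R" "y = \<sigma> (k, x)"
      using y unfolding topspace_Y by blast
    have "h y = \<sigma> (J 0 + k, x)" using J kx J_affine[of k] by simp
    also have "\<dots> = chain_shift (J 0) y" using shift_\<sigma>[OF kx(1)] kx(2) by simp
    finally show ?thesis .
  qed
  then show ?thesis by blast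
qed

subsection \<open>Topological properties of Y\<close>

text \<open>A clopen subset of Y contains either all or none of a copy, since R is connected.\<close>

lemma clopen_contains_copy:
  assumes "openin Y T" "closedin Y T" "x \<in> topspace R"
  shows "\<sigma> (k, x) \<in> T \<longleftrightarrow> \<sigma> (k, b1) \<in> T"
proof -
  let ?S = "{x \<in> topspace R. \<sigma> (k, x) \<in> T}"
  have "openin R ?S" "closedin R ?S"
    using openin_continuous_map_preimage[OF continuous_map_copy assms(1)]
          closedin_continuous_map_preimage[OF continuous_map_copy assms(2)] by blast+
  then have "?S = {} \<or> ?S = topspace R"
    using de_Groot unfolding deGroot_continuum_def connected_space_clopen_in by blast
  then show ?thesis using assms(3) b1 by blast
qed

text \<open>Y is connected: a nonempty clopen set contains some copy, hence (consecutive copies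
  sharing a point) every copy.\<close>

lemma connected_Y: "connected_space Y"
  unfolding connected_space_clopen_in
proof (intro allI impI)
  fix T assume T: "openin Y T \<and> closedin Y T"
  note copy = clopen_contains_copy[OF T[THEN conjunct1] T[THEN conjunct2]]
  have next_copy: "\<sigma> (k + 1, b1) \<in> T \<longleftrightarrow> \<sigma> (k, b1) \<in> T" for k
    using copy[OF b2, of k] \<sigma>_glue by simp
  show "T = {} \<or> T = topspace Y"
  proof (cases "T = {}")
    case False
    then obtain y where y: "y \<in> T" by blast
    then have "y \<in> topspace Y" using T openin_subset by blast
    then obtain k0 x0 where kx: "x0 \<in> topspace R" "y = \<sigma> (k0, x0)"
      unfolding topspace_Y by blast
    have all_copies: "\<sigma> (k, b1) \<in> T" for k
    proof (induct k rule: int_induct[where k = k0])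
      case base then show ?case using copy[OF kx(1)] y kx(2) by simp
    next
      case (step1 i) then show ?case using next_copy[of i] by simp
    next
      case (step2 i) then show ?case using next_copy[of "i - 1"] by simp
    qed
    have "topspace Y \<subseteq> T"
    proof
      fix z assume "z \<in> topspace Y"
      then obtain k x where "x \<in> topspace R" "z = \<sigma> (k, x)" unfolding topspace_Y by blast
      then show "z \<in> T" using copy all_copies by simp
    qed
    then show ?thesis using T openin_subset by blast
  qed simp
qed

text \<open>Y is locally compact: \<sigma>(k,x) has the open neighbourhood where coord (k-1) avoids b1
  and coord (k+1) avoids b2, which lies in the compact union of copies k-1, k, k+1.\<close>

lemma locally_compact_Y: "locally_compact_space Y"
  unfolding locally_compact_space_def
proof
  fix y assume "y \<in> topspace Y"
  then obtain k x where kx: "x \<in> topspace R" "y = \<sigma> (k, x)" unfolding topspace_Y by blast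
  define U where "U = {z \<in> topspace Y. coord (k - 1) z \<in> topspace R - {b1}}
                    \<inter> {z \<in> topspace Y. coord (k + 1) z \<in> topspace R - {b2}}"
  define K where "K = \<sigma> ` ({k - 1..k + 1} \<times> topspace R)"
  have "openin Y U"
    unfolding U_def
    by (intro openin_Int openin_continuous_map_preimage[OF continuous_map_coord] openin_R_minus_point)
  moreover have "compactin Y K"
  proof -
    have "compactin X ({k - 1..k + 1} \<times> topspace R)"
      using de_Groot finite_imp_compactin[of "{k - 1..k + 1}" "discrete_topology UNIV"]
      unfolding deGroot_continuum_def compact_space_def by (simp add: compactin_Times)
    then show ?thesis
      unfolding K_def using image_compactin quotient_imp_continuous_map[OF quotient_map_\<sigma>] by blast
  qed
  moreover have "y \<in> U"
    unfolding U_def kx(2) using \<sigma>_in_Y[OF kx(1)] coord_\<sigma>[OF kx(1)] b1_neq_b2 b1 b2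
    by (simp add: collapse_def)
  moreover have "U \<subseteq> K"
  proof
    fix z assume z: "z \<in> U"
    then obtain a w where aw: "w \<in> topspace R" "z = \<sigma> (a, w)" unfolding U_def topspace_Y by blast
    have "collapse (k - 1) (a, w) \<noteq> b1" "collapse (k + 1) (a, w) \<noteq> b2"
      using z coord_\<sigma>[OF aw(1)] unfolding U_def aw(2) by auto
    then have "a \<in> {k - 1..k + 1}" unfolding collapse_def by (auto split: if_splits)
    then show "z \<in> K" unfolding K_def aw(2) using aw(1) by blast
  qed
  ultimately show "\<exists>U K. openin Y U \<and> compactin Y K \<and> y \<in> U \<and> U \<subseteq> K" by blast
qed

subsection \<open>The isomorphism with the integers\<close>

text \<open>m \<mapsto> shift by m is a homomorphism into H(Y); it is injective because the shifts
  move \<sigma>(0,b1) to distinct points, and surjective because every homeomorphism is a shift.\<close>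

lemma shift_iso: "(\<lambda>m. restrict (chain_shift m) (topspace Y)) \<in> iso integer_group (homeo_group Y)"
proof -
  let ?\<phi> = "\<lambda>m. restrict (chain_shift m) (topspace Y)"
  have carrier: "?\<phi> m \<in> carrier (homeo_group Y)" for m
    unfolding homeo_group_def using homeomorphic_map_eq[OF homeomorphic_map_shift[of m]] by simp
  have mult: "?\<phi> (m + n) = compose (topspace Y) (?\<phi> m) (?\<phi> n)" for m n
    by (auto simp: fun_eq_iff compose_def shift_add shift_in_Y)
  have "inj ?\<phi>"
  proof (rule injI)
    fix m n assume eq: "?\<phi> m = ?\<phi> n"
    have "\<sigma> (m, b1) = ?\<phi> m (\<sigma> (0, b1))" using \<sigma>_in_Y[OF b1] shift_\<sigma>[OF b1] by simp
    also have "\<dots> = ?\<phi> n (\<sigma> (0, b1))" by (simp only: eq)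
    also have "\<dots> = \<sigma> (n, b1)" using \<sigma>_in_Y[OF b1] shift_\<sigma>[OF b1] by simp
    finally show "m = n" using \<sigma>_eq_iff[OF b1 b1] b1_neq_b2 by auto
  qed
  moreover have "carrier (homeo_group Y) \<subseteq> range ?\<phi>"
  proof
    fix h assume "h \<in> carrier (homeo_group Y)"
    then have h: "homeomorphic_map Y Y h" "h \<in> extensional (topspace Y)"
      unfolding homeo_group_def by auto
    obtain m where "\<forall>y \<in> topspace Y. h y = chain_shift m y"
      using injective_map_is_shift homeomorphic_imp_continuous_map[OF h(1)]
            homeomorphic_imp_injective_map[OF h(1)] by blast
    then have "h = ?\<phi> m" by (intro extensionalityI[OF h(2)]) auto
    then show "h \<in> range ?\<phi>" by blast
  qed
  ultimately show ?thesis
    unfolding iso_def hom_def bij_betw_def using carrier mult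
    by (auto simp: homeo_group_def)
qed

end

theorem mainTheorem3:
  fixes R :: "'a topology" and b1 b2 :: 'a
  assumes "deGroot_continuum R"
    and "b1 \<in> topspace R" and "b2 \<in> topspace R" and "b1 \<noteq> b2"
  shows "connected_space (chain_space R b1 b2) \<and>
         locally_compact_space (chain_space R b1 b2) \<and>
         group (homeo_group (chain_space R b1 b2)) \<and>
         (\<lambda>m. restrict (chain_shift m) (topspace (chain_space R b1 b2)))
           \<in> iso integer_group (homeo_group (chain_space R b1 b2))"
proof -
  interpret rigid_chain R b1 b2 using assms by unfold_locales
  show ?thesis using connected_Y locally_compact_Y group_homeo_group shift_iso by blast
qed

end
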